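(* Let $\mathbf C$ be an admissible category of lattices and $X$ a convergence space. The map $\eta_X:X\to\mathrm{pt}(\mathbb P X)$, sending $x$ to the point $S\mapsto 1$ if $x\in S$ and $S\mapsto\emptyset$ otherwise, is injective and initial, i.e. for every filter $\mathcal F$ of subsets of $X$ and every $x\in X$, $\mathcal F\to x$ in $X$ if and only if $\eta_X[\mathcal F]\to\eta_X(x)$ in $\mathrm{pt}(\mathbb P X)$. Moreover, $\eta_X$ is an isomorphism of convergence spaces if $\mathbf C$ is an admissible category of frames or an admissible category of coframes.
   Context: A filter on an inf-semilattice $L$ is a non-empty upward-closed subset closed under binary meets ($L$ itself allowed); $\mathbb F L$ is the set of filters. $\mathbb P(X)$ is the powerset of $X$. A category of lattices has lattices as objects and lattice morphisms (preserving finite suprema and infima) as morphisms; it is admissible if every $\mathbb P(X)$ is an object and there are classes of index sets $\mathcal I,\mathcal J$ such that morphisms $L\to L'$ are exactly monotone maps preserving all existing $I$-indexed infima ($I\in\mathcal I$) and $J$-indexed suprema ($J\in\mathcal J$). Categories of frames/coframes (with frame/coframe morphisms) are understood analogously. A convergence $\mathbf C$-object is $(L,\lim_L)$ with $\lim_L:\mathbb F L\to L$ monotone; morphisms $\varphi:L\to L'$ in $\mathbf C^{\mathrm{conv}}$ are $\mathbf C$-morphisms with $\lim_{L'}\mathcal F\le\varphi(\lim_L\varphi^{-1}(\mathcal F))$. A convergence space is a set $X$ with a relation $\to$ between filters of subsets and points such that $\dot x=\{S:x\in S\}\to x$ and convergence is preserved by enlarging the filter. For $f:X\to Y$, $f[\mathcal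 F]=\{B\subseteq Y:f^{-1}(B)\in\mathcal F\}$. $\mathbb P X$ denotes the convergence $\mathbf C$-object $(\mathbb P(X),\lim)$ with $\lim\mathcal F=\{x:\mathcal F\to x\}$. With $1=\{*\}$, $\mathbb P(1)=\{\emptyset,1\}$ and $\lim_{\mathbb P(1)}$ constantly $1$, the points of a convergence $\mathbf C$-object $L$ are the $\mathbf C^{\mathrm{conv}}$-morphisms $L\to\mathbb P(1)$; $\mathrm{pt}\,L$ is the set of points, $\ell^\bullet=\{\varphi\in\mathrm{pt}\,L:\varphi(\ell)=1\}$, $\mathcal F^\circ=\{\ell:\ell^\bullet\in\mathcal F\}$ for filters $\mathcal F$ of subsets of $\mathrm{pt}\,L$, and $\mathcal F\to\varphi$ in $\mathrm{pt}\,L$ iff $\varphi\in(\lim_L\mathcal F^\circ)^\bullet$. *)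

theory Defs
  imports Main
begin

datatype cat_kind = Lattices | Frames | Coframes

text \<open>Filters on an inf-semilattice (the whole lattice allowed).\<close>
definition lat_filter :: "'a::lattice set \<Rightarrow> bool" where
  "lat_filter F \<longleftrightarrow> F \<noteq> {} \<and> (\<forall>a\<in>F. \<forall>b. a \<le> b \<longrightarrow> b \<in> F) \<and> (\<forall>a\<in>F. \<forall>b\<in>F. inf a b \<in> F)"

text \<open>Morphisms of an admissible category (classes of index sets II, JJ) between
  complete lattices (all infima/suprema exist).\<close>
definition C_morph :: "cat_kind \<Rightarrow> 'i set set \<Rightarrow> 'j set set
     \<Rightarrow> ('a::complete_lattice \<Rightarrow> 'b::complete_lattice) \<Rightarrow> bool" where
  "C_morph k II JJ \<phi> \<longleftrightarrow>
     mono \<phi> \<and> \<phi> top = top \<and> \<phi> bot = bot \<and>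
     (\<forall>a b. \<phi> (inf a b) = inf (\<phi> a) (\<phi> b)) \<and>
     (\<forall>a b. \<phi> (sup a b) = sup (\<phi> a) (\<phi> b)) \<and>
     (\<forall>I\<in>II. \<forall>f :: 'i \<Rightarrow> 'a. \<phi> (INF i\<in>I. f i) = (INF i\<in>I. \<phi> (f i))) \<and>
     (\<forall>J\<in>JJ. \<forall>f :: 'j \<Rightarrow> 'a. \<phi> (SUP j\<in>J. f j) = (SUP j\<in>J. \<phi> (f j))) \<and>
     (k = Frames \<longrightarrow> (\<forall>A. \<phi> (Sup A) = Sup (\<phi> ` A))) \<and>
     (k = Coframes \<longrightarrow> (\<forall>A. \<phi> (Inf A) = Inf (\<phi> ` A)))"

definition conv_morph :: "('a::lattice set \<Rightarrow> 'a) \<Rightarrow> ('b::lattice set \<Rightarrow> 'b) \<Rightarrow> ('a \<Rightarrow> 'b) \<Rightarrow> bool" where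
  "conv_morph limA limB \<phi> \<longleftrightarrow> (\<forall>G. lat_filter G \<longrightarrow> limB G \<le> \<phi> (limA (\<phi> -` G)))"

definition filter_on :: "'a set \<Rightarrow> 'a set set \<Rightarrow> bool" where
  "filter_on A F \<longleftrightarrow> F \<noteq> {} \<and> F \<subseteq> Pow A \<and> (\<forall>S\<in>F. \<forall>T. S \<subseteq> T \<and> T \<subseteq> A \<longrightarrow> T \<in> F)
      \<and> (\<forall>S\<in>F. \<forall>T\<in>F. S \<inter> T \<in> F)"

definition dot_on :: "'a set \<Rightarrow> 'a \<Rightarrow> 'a set set" where
  "dot_on A x = {S. S \<subseteq> A \<and> x \<in> S}"

definition conv_space :: "'a set \<Rightarrow> ('a set set \<Rightarrow> 'a \<Rightarrow> bool) \<Rightarrow> bool" where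
  "conv_space A c \<longleftrightarrow> (\<forall>x\<in>A. c (dot_on A x) x) \<and>
     (\<forall>F G x. filter_on A F \<and> filter_on A G \<and> F \<subseteq> G \<and> x \<in> A \<and> c F x \<longrightarrow> c G x)"

definition img_filter :: "('a \<Rightarrow> 'b) \<Rightarrow> 'a set \<Rightarrow> 'b set \<Rightarrow> 'a set set \<Rightarrow> 'b set set" where
  "img_filter f A B F = {S. S \<subseteq> B \<and> f -` S \<inter> A \<in> F}"

definition conv_continuous :: "'a set \<Rightarrow> ('a set set \<Rightarrow> 'a \<Rightarrow> bool) \<Rightarrow> 'b set
     \<Rightarrow> ('b set set \<Rightarrow> 'b \<Rightarrow> bool) \<Rightarrow> ('a \<Rightarrow> 'b) \<Rightarrow> bool" where
  "conv_continuous A cA B cB f \<longleftrightarrow> f ` A \<subseteq> B \<and>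
     (\<forall>F x. filter_on A F \<and> x \<in> A \<and> cA F x \<longrightarrow> cB (img_filter f A B F) (f x))"

definition conv_iso :: "'a set \<Rightarrow> ('a set set \<Rightarrow> 'a \<Rightarrow> bool) \<Rightarrow> 'b set
     \<Rightarrow> ('b set set \<Rightarrow> 'b \<Rightarrow> bool) \<Rightarrow> ('a \<Rightarrow> 'b) \<Rightarrow> bool" where
  "conv_iso A cA B cB f \<longleftrightarrow> bij_betw f A B \<and> conv_continuous A cA B cB f
     \<and> conv_continuous B cB A cA (inv_into A f)"

text \<open>The convergence C-object P X, and P(1) with P(1) = unit set, lim constantly 1.\<close>
definition limP :: "('x set set \<Rightarrow> 'x \<Rightarrow> bool) \<Rightarrow> 'x set set \<Rightarrow> 'x set" where
  "limP conv F = {x. conv F x}"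

definition limP1 :: "unit set set \<Rightarrow> unit set" where
  "limP1 G = UNIV"

definition pts :: "cat_kind \<Rightarrow> 'i set set \<Rightarrow> 'j set set \<Rightarrow> ('x set set \<Rightarrow> 'x \<Rightarrow> bool)
     \<Rightarrow> ('x set \<Rightarrow> unit set) set" where
  "pts k II JJ conv = {\<phi>. C_morph k II JJ \<phi> \<and> conv_morph (limP conv) limP1 \<phi>}"

definition bullet :: "('x set \<Rightarrow> unit set) set \<Rightarrow> 'x set \<Rightarrow> ('x set \<Rightarrow> unit set) set" where
  "bullet P l = {\<phi>\<in>P. \<phi> l = UNIV}"

definition circ :: "('x set \<Rightarrow> unit set) set \<Rightarrow> ('x set \<Rightarrow> unit set) set set \<Rightarrow> 'x set set" where
  "circ P G = {l. bullet P l \<in> G}"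

definition pt_conv :: "cat_kind \<Rightarrow> 'i set set \<Rightarrow> 'j set set \<Rightarrow> ('x set set \<Rightarrow> 'x \<Rightarrow> bool)
     \<Rightarrow> ('x set \<Rightarrow> unit set) set set \<Rightarrow> ('x set \<Rightarrow> unit set) \<Rightarrow> bool" where
  "pt_conv k II JJ conv G \<phi> \<longleftrightarrow>
     \<phi> \<in> bullet (pts k II JJ conv) (limP conv (circ (pts k II JJ conv) G))"

definition eta :: "'x \<Rightarrow> ('x set \<Rightarrow> unit set)" where
  "eta x = (\<lambda>S. if x \<in> S then UNIV else {})"

end

theory Submission
  imports Defs
begin

text \<open>The preimage under \<open>\<eta> x\<close> of a filter on \<open>P(1)\<close> is either the principal filter of \<open>x\<close>
  or the whole powerset, and both converge to \<open>x\<close>; so \<open>\<eta> x\<close> is a point. Since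
  \<open>\<eta>\<^sup>-\<^sup>1(S\<^sup>\<bullet>) = S\<close>, the filter \<open>\<eta>[F]\<^sup>\<circ>\<close> is \<open>F\<close> again, which is initiality.
  For frames, a point \<open>\<phi>\<close> kills the union \<open>U\<close> of all sets it kills; for any \<open>x \<notin> U\<close>,
  \<open>\<phi> {x} = 1\<close> and preservation of binary meets force \<open>\<phi> = \<eta> x\<close>. Coframes reduce to frames
  via the dual point \<open>S \<mapsto> - \<phi> (- S)\<close>. Hence \<open>\<eta>\<close> is onto the points, and an initial
  bijection is an isomorphism.\<close>

lemma eta_eq_UNIV_iff [simp]: "eta x S = (UNIV :: unit set) \<longleftrightarrow> x \<in> S"
  by (simp add: eta_def)

lemma mem_eta_iff [simp]: "u \<in> (eta x S :: unit set) \<longleftrightarrow> x \<in> S"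
  by (simp add: eta_def)

lemma inj_eta: "inj (eta :: 'x \<Rightarrow> 'x set \<Rightarrow> unit set)"
proof (rule injI)
  fix x y :: 'x
  assume "eta x = (eta y :: 'x set \<Rightarrow> unit set)"
  then have "eta x {x} = (eta y {x} :: unit set)" by simp
  then show "x = y" by (simp add: eta_def split: if_splits)
qed

lemma C_morph_eta: "C_morph k II JJ (eta x :: 'x set \<Rightarrow> unit set)"
  unfolding C_morph_def eta_def by (auto simp: mono_def)

lemma UNIV_mem_lat_filter:
  assumes "lat_filter (G :: 'a set set)"
  shows "UNIV \<in> G"
proof -
  from assms obtain S where "S \<in> G" and "\<And>T. S \<subseteq> T \<Longrightarrow> T \<in> G"
    unfolding lat_filter_def by (metis all_not_in_conv)
  then show ?thesis by simp
qed

lemma vimage_eta_lat_filter_cases: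
  assumes "lat_filter (G :: unit set set)"
  shows "eta x -` G = dot_on UNIV x \<or> eta x -` G = UNIV"
proof -
  have "eta x S \<in> G \<longleftrightarrow> x \<in> S \<or> {} \<in> G" for S
    using UNIV_mem_lat_filter[OF assms] by (simp add: eta_def)
  then show ?thesis
    by (cases "{} \<in> G") (simp_all add: set_eq_iff dot_on_def)
qed

lemma conv_morph_eta:
  assumes "conv_space UNIV conv"
  shows "conv_morph (limP conv) limP1 (eta x :: 'x set \<Rightarrow> unit set)"
  unfolding conv_morph_def
proof (intro allI impI)
  fix G :: "unit set set"
  assume "lat_filter G"
  have dot: "filter_on UNIV (dot_on UNIV x)" "conv (dot_on UNIV x) x"
    using assms by (auto simp: filter_on_def dot_on_def conv_space_def)
  moreover have "filter_on UNIV (UNIV :: 'x set set)" "dot_on UNIV x \<subseteq> UNIV"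
    by (auto simp: filter_on_def)
  ultimately have "conv (UNIV :: 'x set set) x"
    using assms unfolding conv_space_def by blast
  with dot have "conv (eta x -` G) x"
    using vimage_eta_lat_filter_cases[of G x] \<open>lat_filter G\<close> by auto
  then show "limP1 G \<le> eta x (limP conv (eta x -` G))"
    by (simp add: limP_def limP1_def eta_def)
qed

lemma eta_in_pts:
  assumes "conv_space UNIV conv"
  shows "(eta x :: 'x set \<Rightarrow> unit set) \<in> pts k II JJ conv"
  using C_morph_eta conv_morph_eta[OF assms] by (simp add: pts_def)

lemma pt_conv_eta_iff:
  assumes "conv_space UNIV conv"
  shows "pt_conv k II JJ conv G (eta x) \<longleftrightarrow> conv (circ (pts k II JJ conv) G) x"
  using eta_in_pts[OF assms, of x k II JJ] by (simp add: pt_conv_def bullet_def limP_def)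

lemma circ_img_filter_eta:
  assumes "range eta \<subseteq> P" and "filter_on UNIV F"
  shows "circ P (img_filter eta UNIV P F) = F"
proof -
  have "eta -` bullet P S = S" for S
    using assms(1) by (auto simp: bullet_def)
  moreover have "bullet P S \<subseteq> P" for S
    by (auto simp: bullet_def)
  ultimately show ?thesis
    by (simp add: circ_def img_filter_def)
qed

lemma img_filter_inv_eta:
  "img_filter (inv eta) (range eta) UNIV G = circ (range (eta :: 'x \<Rightarrow> 'x set \<Rightarrow> unit set)) G"
proof -
  have "inv eta -` S \<inter> range eta = (eta :: 'x \<Rightarrow> 'x set \<Rightarrow> unit set) ` S" for S
    by (auto simp: inv_f_f[OF inj_eta])
  moreover have "bullet (range eta) S = (eta :: 'x \<Rightarrow> 'x set \<Rightarrow> unit set) ` S" for S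
    by (auto simp: bullet_def)
  ultimately show ?thesis
    by (simp add: img_filter_def circ_def)
qed

lemma Union_preserving_eq_eta:
  fixes \<phi> :: "'x set \<Rightarrow> unit set"
  assumes Sup: "\<And>A. \<phi> (\<Union>A) = \<Union>(\<phi> ` A)"
    and top: "\<phi> UNIV = UNIV"
    and inf: "\<And>S T. \<phi> (S \<inter> T) = \<phi> S \<inter> \<phi> T"
  shows "\<exists>x. \<phi> = eta x"
proof -
  define U where "U = \<Union>{S. \<phi> S = {}}"
  have "\<phi> U = {}" unfolding U_def Sup by auto
  with top have "U \<noteq> UNIV" by auto
  then obtain x where "x \<notin> U" by blast
  then have in_S: "\<phi> S = UNIV" if "x \<in> S" for S
    using that unfolding U_def by auto
  have out_S: "\<phi> S = {}" if "x \<notin> S" for S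
  proof -
    have "\<phi> {} = {}" using Sup[of "{}"] by simp
    then have "\<phi> S \<inter> \<phi> {x} = {}" using inf[of S "{x}"] that by simp
    then show ?thesis using in_S[of "{x}"] by simp
  qed
  have "\<phi> = eta x"
    using in_S out_S by (intro ext) (simp add: eta_def)
  then show ?thesis ..
qed

lemma Inter_preserving_eq_eta:
  fixes \<phi> :: "'x set \<Rightarrow> unit set"
  assumes Inf: "\<And>A. \<phi> (\<Inter>A) = \<Inter>(\<phi> ` A)"
    and bot: "\<phi> {} = {}"
    and sup: "\<And>S T. \<phi> (S \<union> T) = \<phi> S \<union> \<phi> T"
  shows "\<exists>x. \<phi> = eta x"
proof -
  define \<psi> where "\<psi> S = - \<phi> (- S)" for S
  have "\<psi> (\<Union>A) = \<Union>(\<psi> ` A)" for A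
    unfolding \<psi>_def uminus_Sup Inf uminus_Inf image_image ..
  moreover have "\<psi> UNIV = UNIV" "\<psi> (S \<inter> T) = \<psi> S \<inter> \<psi> T" for S T
    unfolding \<psi>_def using bot sup[of "- S" "- T"] by simp_all
  ultimately have "\<exists>x. \<psi> = eta x"
    by (rule Union_preserving_eq_eta)
  then obtain x where "\<psi> = eta x" ..
  have "\<phi> S = eta x S" for S
  proof -
    have "\<phi> S = - \<psi> (- S)"
      by (simp add: \<psi>_def)
    also have "\<dots> = eta x S"
      using \<open>\<psi> = eta x\<close> by (simp add: eta_def)
    finally show ?thesis .
  qed
  then show ?thesis by blast
qed

lemma pts_eq_range_eta:
  assumes "k = Frames \<or> k = Coframes" and "conv_space UNIV conv"
  shows "pts k II JJ conv = range eta"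
proof -
  have "\<exists>x. \<phi> = eta x" if "\<phi> \<in> pts k II JJ conv" for \<phi>
  proof -
    have "C_morph k II JJ \<phi>" using that by (simp add: pts_def)
    with assms(1) show ?thesis
      unfolding C_morph_def
      using Union_preserving_eq_eta[of \<phi>] Inter_preserving_eq_eta[of \<phi>] by auto
  qed
  then show ?thesis using eta_in_pts[OF assms(2)] by blast
qed

theorem mainTheorem3:
  fixes k :: cat_kind and II :: "'i set set" and JJ :: "'j set set"
    and conv :: "'x set set \<Rightarrow> 'x \<Rightarrow> bool"
  assumes "conv_space UNIV conv"
  shows "(\<forall>x. (eta x :: 'x set \<Rightarrow> unit set) \<in> pts k II JJ conv)
    \<and> inj (eta :: 'x \<Rightarrow> 'x set \<Rightarrow> unit set)
    \<and> (\<forall>F x. filter_on UNIV F \<longrightarrow>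
          (conv F x \<longleftrightarrow> pt_conv k II JJ conv (img_filter eta UNIV (pts k II JJ conv) F) (eta x)))
    \<and> (k = Frames \<or> k = Coframes \<longrightarrow>
          conv_iso UNIV conv (pts k II JJ conv) (pt_conv k II JJ conv) eta)"
proof -
  let ?P = "pts k II JJ conv" and ?c = "pt_conv k II JJ conv"
  have points: "range eta \<subseteq> ?P"
    using eta_in_pts[OF assms] by blast
  have initial: "conv F x \<longleftrightarrow> ?c (img_filter eta UNIV ?P F) (eta x)"
    if "filter_on UNIV F" for F x
    using pt_conv_eta_iff[OF assms, of k II JJ] circ_img_filter_eta[OF points that] by simp
  have "conv_iso UNIV conv ?P ?c eta" if "k = Frames \<or> k = Coframes"
  proof -
    have onto: "?P = range eta" using pts_eq_range_eta[OF that assms] .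
    have "conv_continuous ?P ?c UNIV conv (inv eta)"
      unfolding conv_continuous_def onto img_filter_inv_eta
      by (auto simp: inj_eta pt_conv_eta_iff[OF assms, of k II JJ, unfolded onto])
    moreover have "conv_continuous UNIV conv ?P ?c eta"
      using points initial by (auto simp: conv_continuous_def)
    ultimately show ?thesis
      using inj_eta onto by (simp add: conv_iso_def bij_betw_def)
  qed
  with points initial inj_eta show ?thesis by blast
qed

end
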